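(* Let $B_1,B_2$ be compact curves of genus at least two, let $g$ be the genus of $B_2$, and let $\mathcal A=(D_1\cup\dots\cup D_m,d,\{(t_i,r_i,n_i)\}_{i=1}^m)$ be a simple Galois admissible configuration for $B_1\times B_2$. If $m\le3(g-1)$, then $\nu(\mathcal A)\le2+\frac23$, with equality if and only if $m=3(g-1)$ and $r_i=3$ for all $i$.
   Context: A simple Galois admissible configuration for $B_1\times B_2$ consists of: pairwise disjoint curves $D_1,\dots,D_m\subset B_1\times B_2$, each the graph of an étale map $B_1\to B_2$; a positive integer $d$; and for each $i$ positive integers $t_i,n_i$ and $r_i\ge2$ with $d=t_in_ir_i$. Its abstract slope is $$\nu(\mathcal A)=2+\frac{-\sum_{i=1}^m t_in_i\frac{(r_i-1)(r_i+1)}{r_i}e(D_i)}{d\,e(B_1\times B_2)-\sum_{i=1}^m\beta_ie(D_i)},\qquad \beta_i=t_in_i(r_i-1),$$ where $e$ denotes topological Euler characteristic; equivalently $\nu(\mathcal A)=2+\dfrac{1-\frac1m\sum_i r_i^{-2}}{\frac{2g-2}{m}+1-\frac1m\sum_i r_i^{-1}}$. *)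

theory Defs
  imports Complex_Main
begin

definition euler_curve :: "nat \<Rightarrow> real" where
  "euler_curve g = 2 - 2 * real g"

text \<open>Numerical data of a simple Galois admissible configuration for B1 x B2,
  with B1 of genus g1 and B2 of genus g2; curves D_i (i < m) are graphs of maps
  B1 -> B2, hence isomorphic to B1, so e(D_i) = e(B1); e(B1 x B2) = e(B1) e(B2).\<close>
definition sgac_data ::
  "nat \<Rightarrow> nat \<Rightarrow> nat \<Rightarrow> nat \<Rightarrow> (nat \<Rightarrow> nat) \<Rightarrow> (nat \<Rightarrow> nat) \<Rightarrow> (nat \<Rightarrow> nat) \<Rightarrow> bool" where
  "sgac_data g1 g2 m d t n r \<longleftrightarrow> m \<ge> 1 \<and> d > 0 \<and>
     (\<forall>i<m. t i > 0 \<and> n i > 0 \<and> r i \<ge> 2 \<and> d = t i * n i * r i)"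

definition abstract_slope ::
  "nat \<Rightarrow> nat \<Rightarrow> nat \<Rightarrow> nat \<Rightarrow> (nat \<Rightarrow> nat) \<Rightarrow> (nat \<Rightarrow> nat) \<Rightarrow> (nat \<Rightarrow> nat) \<Rightarrow> real" where
  "abstract_slope g1 g2 m d t n r =
     2 + (- (\<Sum>i<m. real (t i * n i) * ((real (r i) - 1) * (real (r i) + 1) / real (r i))
                      * euler_curve g1))
       / (real d * (euler_curve g1 * euler_curve g2)
          - (\<Sum>i<m. real (t i * n i) * (real (r i) - 1) * euler_curve g1))"

end

theory Submission
  imports Defs
begin

text \<open>Dividing numerator and denominator of the slope by \<open>-d e(B\<^sub>1)\<close> (using \<open>d = t\<^sub>i n\<^sub>i r\<^sub>i\<close>)
  gives \<open>\<nu> = 2 + S / (2(g - 1) + T)\<close> with \<open>S = \<Sum> (1 - r\<^sub>i\<^sup>-\<^sup>2)\<close> and \<open>T = \<Sum> (1 - r\<^sub>i\<^sup>-\<^sup>1)\<close>.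
  The identity \<open>3(1 - r\<^sup>-\<^sup>2) - 2(1 - r\<^sup>-\<^sup>1) = 4/3 - (r - 3)\<^sup>2/(3r\<^sup>2)\<close> turns
  \<open>3S - 2(2(g - 1) + T)\<close> into \<open>4(m - 3(g - 1))/3\<close> minus a sum of squares, which is \<open>\<le> 0\<close>
  for \<open>m \<le> 3(g - 1)\<close> and vanishes exactly when \<open>m = 3(g - 1)\<close> and every \<open>r\<^sub>i = 3\<close>.\<close>

lemma abstract_slope_eq:
  assumes "sgac_data g1 g2 m d t n r" and "g1 \<noteq> 1"
  shows "abstract_slope g1 g2 m d t n r =
    2 + (\<Sum>i<m. 1 - 1 / real (r i) ^ 2) / (2 * (real g2 - 1) + (\<Sum>i<m. 1 - 1 / real (r i)))"
proof -
  define e1 where "e1 = euler_curve g1"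
  define S where "S = (\<Sum>i<m. 1 - 1 / real (r i) ^ 2)"
  define T where "T = (\<Sum>i<m. 1 - 1 / real (r i))"
  have data: "\<And>i. i < m \<Longrightarrow> r i \<ge> 2 \<and> real d = real (t i * n i) * real (r i)"
    using assms(1) unfolding sgac_data_def by auto
  have "real d \<noteq> 0" "e1 \<noteq> 0"
    using assms unfolding sgac_data_def e1_def euler_curve_def by auto
  have num: "(\<Sum>i<m. real (t i * n i) * ((real (r i) - 1) * (real (r i) + 1) / real (r i)) * e1)
      = real d * e1 * S"
    unfolding S_def sum_distrib_left
    by (rule sum.cong) (auto dest!: data simp: field_simps power2_eq_square)
  have den: "(\<Sum>i<m. real (t i * n i) * (real (r i) - 1) * e1) = real d * e1 * T"
    unfolding T_def sum_distrib_left
    by (rule sum.cong) (auto dest!: data simp: field_simps)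
  have "abstract_slope g1 g2 m d t n r
      = 2 + - (real d * e1 * S) / (- (real d * e1) * (2 * (real g2 - 1) + T))"
    unfolding abstract_slope_def num den e1_def[symmetric]
    by (simp add: euler_curve_def algebra_simps)
  also have "\<dots> = 2 + S / (2 * (real g2 - 1) + T)"
    using \<open>real d \<noteq> 0\<close> \<open>e1 \<noteq> 0\<close> by simp
  finally show ?thesis unfolding S_def T_def .
qed

lemma three_sq_defect_minus_two_defect:
  fixes x :: real
  assumes "x \<noteq> 0"
  shows "3 * (1 - 1 / x ^ 2) - 2 * (1 - 1 / x) = 4 / 3 - (x - 3) ^ 2 / (3 * x ^ 2)"
  using assms by (simp add: field_simps power2_eq_square)

lemma defect_ratio_le_two_thirds:
  fixes \<rho> :: "nat \<Rightarrow> real" and G :: real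
  assumes \<rho>: "\<And>i. i < m \<Longrightarrow> \<rho> i \<ge> 1" and "G > 0" and "real m \<le> 3 * G"
  defines "S \<equiv> \<Sum>i<m. 1 - 1 / \<rho> i ^ 2"
    and "P \<equiv> 2 * G + (\<Sum>i<m. 1 - 1 / \<rho> i)"
  shows "S / P \<le> 2 / 3 \<and> (S / P = 2 / 3 \<longleftrightarrow> real m = 3 * G \<and> (\<forall>i<m. \<rho> i = 3))"
proof -
  define h where "h i = (\<rho> i - 3) ^ 2 / (3 * \<rho> i ^ 2)" for i
  have "(\<Sum>i<m. 1 - 1 / \<rho> i) \<ge> 0"
    by (rule sum_nonneg) (use \<rho> in \<open>fastforce simp: divide_le_eq_1\<close>)
  then have "P > 0" using \<open>G > 0\<close> unfolding P_def by simp
  have "3 * S - 2 * P = (\<Sum>i<m. 3 * (1 - 1 / \<rho> i ^ 2) - 2 * (1 - 1 / \<rho> i)) - 4 * G"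
    unfolding S_def P_def by (simp add: sum_distrib_left sum_subtractf sum.distrib)
  also have "\<dots> = (\<Sum>i<m. 4 / 3 - h i) - 4 * G"
    using \<rho> unfolding h_def
    by (intro arg_cong[where f = "\<lambda>s. s - 4 * G"] sum.cong refl three_sq_defect_minus_two_defect)
      force
  finally have key: "3 * S - 2 * P = 4 / 3 * (real m - 3 * G) - (\<Sum>i<m. h i)"
    by (simp add: sum_subtractf algebra_simps)
  have h_nonneg: "\<And>i. h i \<ge> 0" unfolding h_def by simp
  then have "(\<Sum>i<m. h i) \<ge> 0" by (simp add: sum_nonneg)
  have "(\<Sum>i<m. h i) = 0 \<longleftrightarrow> (\<forall>i<m. \<rho> i = 3)"
    using \<rho> by (subst sum_nonneg_eq_0_iff) (force simp: h_nonneg h_def)+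
  with key \<open>(\<Sum>i<m. h i) \<ge> 0\<close> \<open>real m \<le> 3 * G\<close> \<open>P > 0\<close> show ?thesis
    by (auto simp: field_simps)
qed

theorem proposition5p6:
  fixes g1 g m d :: nat and t n r :: "nat \<Rightarrow> nat"
  assumes "g1 \<ge> 2" and "g \<ge> 2"
    and "sgac_data g1 g m d t n r"
    and "m \<le> 3 * (g - 1)"
  shows "abstract_slope g1 g m d t n r \<le> 2 + 2 / 3 \<and>
         (abstract_slope g1 g m d t n r = 2 + 2 / 3 \<longleftrightarrow>
           (m = 3 * (g - 1) \<and> (\<forall>i<m. r i = 3)))"
proof -
  have r_ge: "\<And>i. i < m \<Longrightarrow> real (r i) \<ge> 1"
    using assms(3) unfolding sgac_data_def by force
  have g_minus_1: "real (3 * (g - 1)) = 3 * (real g - 1)" using assms(2) by simp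
  have "real m \<le> real (3 * (g - 1))" using assms(4) by (simp only: of_nat_le_iff)
  moreover have "m = 3 * (g - 1) \<longleftrightarrow> real m = real (3 * (g - 1))" by (simp only: of_nat_eq_iff)
  ultimately have "real m \<le> 3 * (real g - 1)"
    and "m = 3 * (g - 1) \<longleftrightarrow> real m = 3 * (real g - 1)"
    unfolding g_minus_1 by simp_all
  moreover have "(\<forall>i<m. real (r i) = 3) \<longleftrightarrow> (\<forall>i<m. r i = 3)" by simp
  moreover have "abstract_slope g1 g m d t n r =
      2 + (\<Sum>i<m. 1 - 1 / real (r i) ^ 2) / (2 * (real g - 1) + (\<Sum>i<m. 1 - 1 / real (r i)))"
    using abstract_slope_eq[OF assms(3)] assms(1) by simp
  ultimately show ?thesis
    using defect_ratio_le_two_thirds[of m "\<lambda>i. real (r i)" "real g - 1", OF r_ge] assms(2)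
    unfolding add_le_cancel_left add_left_cancel by simp
qed

end
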